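(* Let $I_A$ and $I_B$ be two MatP instances with the same underlying graph $G=(W\cup F,E)$ that differ only in the preference order of a single agent $x\in W\cup F$. Let $e=\{x,y\}\in E$ and let $I_H$ be a hybrid instance of $(I_A,I_B)$ with respect to $e$. Let $M$ be a matching with $e\in M$. Then: (1) if $M$ is robust popular with respect to $I_A$ and $I_B$, then $M$ is popular for $I_H$; (2) if $M$ is robust dominant with respect to $I_A$ and $I_B$, then $M$ is dominant for $I_H$.
   Context: An instance $I$ of matchings under preferences (MatP) consists of a bipartite graph $G^I=(W\cup F,E^I)$ with disjoint finite vertex sets $W$ (workers) and $F$ (firms), whose elements are called agents, together with, for each agent $x$, a strict linear order $\succ_x^I$ (preference order) over the set $N_x^I$ of neighbors of $x$ in $G^I$. A matching is a set of pairwise disjoint edges; $M(x)$ denotes the partner of a matched agent $x$. Agent $x$ prefers $M$ over $M'$ if $x$ is matched in $M$ and unmatched in $M'$, or matched in both with $M(x)\succ_x M'(x)$. Define $\mathrm{vote}^I_x(M,M')=1$ if $x$ prefers $M$ over $M'$, $-1$ if $x$ prefers $M'$ over $M$, and $0$ otherwise, and the popularity margin $\phi^I(M,M')=\sum_{x\in W\cup F}\mathrm{vote}^I_x(M,M')$. A matching $M$ of $G^I$ is popular for $I$ if $\phi^I(M,M')\ge 0$ for every matching $M'$ of $G^I$; it is dominant for $I$ if it is popular and $\phi^I(M,M')>0$ for every matching $M'$ of $G^I$ with $|M'|>|M|$. For two instances $I_A,I_B$ on the same agent sets, a matching is robust popular (resp. robust dominant) with respect to $I_A$ and $I_B$ if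 it is popular (resp. dominant) for both $I_A$ and $I_B$. Hybrid instance: suppose $I_A,I_B$ have the same graph $G$ and differ only in the preferences of agent $x$, and let $e=\{x,y\}\in E$. Let $P^A=\{z: z\succ_x^{I_A} y\}$ and $P^B=\{z: z\succ_x^{I_B} y\}$. A hybrid instance $I_H$ of $(I_A,I_B)$ with respect to $e$ is the MatP instance on $G$ in which every agent $z\neq x$ has preference order $\succ_z^{I_A}$, and $x$ has any linear order $\succ'$ on $N_x$ such that $z\succ' y$ for all $z\in P^A\cup P^B$ and $y\succ' z$ for all $z\in N_x\setminus(P^A\cup P^B\cup\{y\})$. *)

theory Defs
  imports Main
begin

(* Preferences: P x is a relation on agents; (a,b) \<in> P x means  a \<succ>_x b. *)

definition bipartite_graph :: "'a set \<Rightarrow> 'a set \<Rightarrow> 'a set set \<Rightarrow> bool" where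
  "bipartite_graph W F E \<longleftrightarrow> finite W \<and> finite F \<and> W \<inter> F = {} \<and>
     E \<subseteq> {{w, f} | w f. w \<in> W \<and> f \<in> F}"

definition nbrs :: "'a set set \<Rightarrow> 'a \<Rightarrow> 'a set" where
  "nbrs E x = {y. {x, y} \<in> E}"

definition matp_instance :: "'a set \<Rightarrow> 'a set \<Rightarrow> 'a set set \<Rightarrow> ('a \<Rightarrow> 'a rel) \<Rightarrow> bool" where
  "matp_instance W F E P \<longleftrightarrow> bipartite_graph W F E \<and>
     (\<forall>x \<in> W \<union> F. P x \<subseteq> nbrs E x \<times> nbrs E x \<and> strict_linear_order_on (nbrs E x) (P x))"

definition matching :: "'a set set \<Rightarrow> 'a set set \<Rightarrow> bool" where
  "matching E M \<longleftrightarrow> M \<subseteq> E \<and> (\<forall>e \<in> M. \<forall>e' \<in> M. e \<noteq> e' \<longrightarrow> e \<inter> e' = {})"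

definition matched :: "'a set set \<Rightarrow> 'a \<Rightarrow> bool" where
  "matched M x \<longleftrightarrow> (\<exists>e \<in> M. x \<in> e)"

definition partner :: "'a set set \<Rightarrow> 'a \<Rightarrow> 'a" where
  "partner M x = (THE y. {x, y} \<in> M)"

definition prefers :: "('a \<Rightarrow> 'a rel) \<Rightarrow> 'a \<Rightarrow> 'a set set \<Rightarrow> 'a set set \<Rightarrow> bool" where
  "prefers P x M M' \<longleftrightarrow> matched M x \<and>
     (\<not> matched M' x \<or> (matched M' x \<and> (partner M x, partner M' x) \<in> P x))"

definition vote :: "('a \<Rightarrow> 'a rel) \<Rightarrow> 'a \<Rightarrow> 'a set set \<Rightarrow> 'a set set \<Rightarrow> int" where
  "vote P x M M' = (if prefers P x M M' then 1 else if prefers P x M' M then -1 else 0)"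

definition phi :: "'a set \<Rightarrow> 'a set \<Rightarrow> ('a \<Rightarrow> 'a rel) \<Rightarrow> 'a set set \<Rightarrow> 'a set set \<Rightarrow> int" where
  "phi W F P M M' = (\<Sum>x \<in> W \<union> F. vote P x M M')"

definition popular :: "'a set \<Rightarrow> 'a set \<Rightarrow> 'a set set \<Rightarrow> ('a \<Rightarrow> 'a rel) \<Rightarrow> 'a set set \<Rightarrow> bool" where
  "popular W F E P M \<longleftrightarrow> matching E M \<and> (\<forall>M'. matching E M' \<longrightarrow> phi W F P M M' \<ge> 0)"

definition dominant :: "'a set \<Rightarrow> 'a set \<Rightarrow> 'a set set \<Rightarrow> ('a \<Rightarrow> 'a rel) \<Rightarrow> 'a set set \<Rightarrow> bool" where
  "dominant W F E P M \<longleftrightarrow> popular W F E P M \<and>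
     (\<forall>M'. matching E M' \<and> card M' > card M \<longrightarrow> phi W F P M M' > 0)"

definition hybrid :: "'a set set \<Rightarrow> ('a \<Rightarrow> 'a rel) \<Rightarrow> ('a \<Rightarrow> 'a rel) \<Rightarrow> 'a \<Rightarrow> 'a
                      \<Rightarrow> ('a \<Rightarrow> 'a rel) \<Rightarrow> bool" where
  "hybrid E PA PB x y PH \<longleftrightarrow>
     (\<forall>z. z \<noteq> x \<longrightarrow> PH z = PA z) \<and>
     PH x \<subseteq> nbrs E x \<times> nbrs E x \<and> strict_linear_order_on (nbrs E x) (PH x) \<and>
     (let Pset = {z. (z, y) \<in> PA x} \<union> {z. (z, y) \<in> PB x} in
       (\<forall>z \<in> Pset. (z, y) \<in> PH x) \<and>
       (\<forall>z \<in> nbrs E x - (Pset \<union> {y}). (y, z) \<in> PH x))"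

end

theory Submission
  imports Defs
begin

text \<open>At every agent other than x the three instances agree, so only x's vote can differ.
  If x's partner in the competing matching is ranked above y by \<open>I_A\<close> or by \<open>I_B\<close>, it is
  ranked above y by \<open>I_H\<close> as well, and every other neighbour is ranked below y by \<open>I_H\<close>.
  Hence x's vote, and with it the popularity margin, in \<open>I_H\<close> is at least the smaller of the
  two margins in \<open>I_A\<close> and \<open>I_B\<close>; popularity and dominance carry over.\<close>

lemma bipartite_graph_edge_cases:
  assumes "bipartite_graph W F E" "e \<in> E" "x \<in> e"
  shows "\<exists>z. e = {x, z} \<and> z \<noteq> x"
proof -
  obtain w f where "e = {w, f}" "w \<in> W" "f \<in> F"
    using assms(1,2) unfolding bipartite_graph_def by blast
  moreover have "w \<noteq> f"
    using calculation assms(1) unfolding bipartite_graph_def by blast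
  ultimately show ?thesis using assms(3) by blast
qed

lemma bipartite_graph_edge_neq:
  assumes "bipartite_graph W F E" "{a, b} \<in> E"
  shows "a \<noteq> b"
  using bipartite_graph_edge_cases[OF assms] by (auto simp: doubleton_eq_iff)

lemma partner_eq:
  assumes "matching E M" "{x, y} \<in> M" "x \<noteq> y"
  shows "partner M x = y"
  unfolding partner_def
proof (rule the_equality)
  fix z assume "{x, z} \<in> M"
  moreover have "{x, z} \<inter> {x, y} \<noteq> {}" by simp
  ultimately have "{x, z} = {x, y}"
    using assms(1,2) unfolding matching_def by metis
  then show "z = y" using assms(3) by (auto simp: doubleton_eq_iff)
qed (fact assms(2))

lemma matched_partner_edge:
  assumes "bipartite_graph W F E" "matching E M" "matched M x"
  shows "{x, partner M x} \<in> M"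
proof -
  obtain e where e: "e \<in> M" "x \<in> e" using assms(3) unfolding matched_def by blast
  then have "e \<in> E" using assms(2) unfolding matching_def by blast
  then obtain z where "e = {x, z}" "z \<noteq> x"
    using bipartite_graph_edge_cases[OF assms(1) _ e(2)] by blast
  then show ?thesis using partner_eq[OF assms(2)] e(1) by auto
qed

lemma vote_matched_to:
  assumes "matching E M" "{x, y} \<in> M" "x \<noteq> y"
  shows "vote P x M M' =
    (if \<not> matched M' x then 1
     else if (y, partner M' x) \<in> P x then 1
     else if (partner M' x, y) \<in> P x then -1 else 0)"
proof -
  have "matched M x" using assms(2) unfolding matched_def by blast
  then show ?thesis
    using partner_eq[OF assms] unfolding vote_def prefers_def by auto
qed

lemma phi_minus_vote_local:
  assumes "finite (W \<union> F)" "x \<in> W \<union> F" "\<forall>z. z \<noteq> x \<longrightarrow> P z = Q z"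
  shows "phi W F P M M' - vote P x M M' = phi W F Q M M' - vote Q x M M'"
proof -
  have "phi W F R M M' - vote R x M M' = (\<Sum>z \<in> W \<union> F - {x}. vote R z M M')" for R
    unfolding phi_def using assms(1,2) by (simp add: sum.remove)
  moreover have "(\<Sum>z \<in> W \<union> F - {x}. vote P z M M') = (\<Sum>z \<in> W \<union> F - {x}. vote Q z M M')"
    using assms(3) by (intro sum.cong) (simp_all add: vote_def prefers_def)
  ultimately show ?thesis by simp
qed

lemma hybrid_prefs:
  assumes "hybrid E PA PB x y PH"
  shows "(z, y) \<in> PA x \<or> (z, y) \<in> PB x \<Longrightarrow> (z, y) \<in> PH x"
    and "z \<in> nbrs E x \<Longrightarrow> z \<noteq> y \<Longrightarrow> (z, y) \<notin> PA x \<Longrightarrow> (z, y) \<notin> PB x \<Longrightarrow> (y, z) \<in> PH x"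
  using assms unfolding hybrid_def Let_def by blast+

lemma strict_linear_order_on_asym:
  "strict_linear_order_on A r \<Longrightarrow> (a, b) \<in> r \<Longrightarrow> (b, a) \<notin> r"
  unfolding strict_linear_order_on_def irrefl_def trans_def by blast

lemma vote_hybrid_ge_min:
  assumes G: "bipartite_graph W F E"
    and A: "strict_linear_order_on (nbrs E x) (PA x)"
    and B: "strict_linear_order_on (nbrs E x) (PB x)"
    and H: "hybrid E PA PB x y PH"
    and M: "matching E M" "{x, y} \<in> M" and M': "matching E M'"
  shows "vote PH x M M' \<ge> min (vote PA x M M') (vote PB x M M')"
proof -
  have "{x, y} \<in> E" using M unfolding matching_def by blast
  then have "x \<noteq> y" by (rule bipartite_graph_edge_neq[OF G])
  note vote = vote_matched_to[OF M this]
  have SH: "strict_linear_order_on (nbrs E x) (PH x)" using H unfolding hybrid_def by blast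
  show ?thesis
  proof (cases "matched M' x")
    case True
    define z where "z = partner M' x"
    have z: "z \<in> nbrs E x"
      using matched_partner_edge[OF G M' True] M' unfolding z_def matching_def nbrs_def by blast
    consider (above) "(z, y) \<in> PA x \<or> (z, y) \<in> PB x" | (same) "z = y"
      | (below) "z \<noteq> y" "(z, y) \<notin> PA x" "(z, y) \<notin> PB x" by blast
    then show ?thesis
    proof cases
      case above
      then have "vote PH x M M' = -1"
        using vote[of PH] True hybrid_prefs(1)[OF H] strict_linear_order_on_asym[OF SH]
        unfolding z_def by auto
      moreover have "vote PA x M M' = -1 \<or> vote PB x M M' = -1"
        using above vote True strict_linear_order_on_asym[OF A] strict_linear_order_on_asym[OF B]
        unfolding z_def by auto
      ultimately show ?thesis by auto
    next
      case same
      have "(y, y) \<notin> PH x" "(y, y) \<notin> PA x"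
        using strict_linear_order_on_asym[OF SH] strict_linear_order_on_asym[OF A] by blast+
      then show ?thesis using vote True same unfolding z_def by simp
    next
      case below
      then have "vote PH x M M' = 1"
        using vote[of PH] True hybrid_prefs(2)[OF H z] unfolding z_def by auto
      then show ?thesis unfolding vote_def by auto
    qed
  qed (simp add: vote)
qed

lemma phi_hybrid_ge_min:
  assumes A: "matp_instance W F E PA" and B: "matp_instance W F E PB"
    and x: "x \<in> W \<union> F" and AB: "\<forall>z. z \<noteq> x \<longrightarrow> PA z = PB z"
    and H: "hybrid E PA PB x y PH"
    and M: "matching E M" "{x, y} \<in> M" and M': "matching E M'"
  shows "phi W F PH M M' \<ge> min (phi W F PA M M') (phi W F PB M M')"
proof -
  have G: "bipartite_graph W F E" and fin: "finite (W \<union> F)"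
    using A unfolding matp_instance_def bipartite_graph_def by blast+
  have "vote PH x M M' \<ge> min (vote PA x M M') (vote PB x M M')"
    using vote_hybrid_ge_min[OF G _ _ H M M'] A B x unfolding matp_instance_def by blast
  moreover have "\<forall>z. z \<noteq> x \<longrightarrow> PH z = PA z" using H unfolding hybrid_def by blast
  then have "phi W F PH M M' - vote PH x M M' = phi W F PA M M' - vote PA x M M'"
    by (rule phi_minus_vote_local[OF fin x])
  ultimately show ?thesis using phi_minus_vote_local[OF fin x AB, of M M'] by linarith
qed

lemma popular_if_phi_ge_min:
  assumes "\<And>M'. matching E M' \<Longrightarrow> phi W F PH M M' \<ge> min (phi W F PA M M') (phi W F PB M M')"
    and "popular W F E PA M" "popular W F E PB M"
  shows "popular W F E PH M"
  using assms unfolding popular_def by (smt (verit))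

lemma dominant_if_phi_ge_min:
  assumes "\<And>M'. matching E M' \<Longrightarrow> phi W F PH M M' \<ge> min (phi W F PA M M') (phi W F PB M M')"
    and "dominant W F E PA M" "dominant W F E PB M"
  shows "dominant W F E PH M"
proof -
  have "popular W F E PH M"
    using popular_if_phi_ge_min assms unfolding dominant_def by blast
  then show ?thesis using assms unfolding dominant_def by (smt (verit))
qed

theorem lemma2:
  fixes W F :: "'a set" and E :: "'a set set" and PA PB PH :: "'a \<Rightarrow> 'a rel"
    and x y :: 'a and M :: "'a set set"
  assumes "matp_instance W F E PA"
    and "matp_instance W F E PB"
    and "x \<in> W \<union> F"
    and "\<forall>z. z \<noteq> x \<longrightarrow> PA z = PB z"
    and "{x, y} \<in> E"
    and "hybrid E PA PB x y PH"
    and "matching E M"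
    and "{x, y} \<in> M"
  shows "(popular W F E PA M \<and> popular W F E PB M \<longrightarrow> popular W F E PH M) \<and>
         (dominant W F E PA M \<and> dominant W F E PB M \<longrightarrow> dominant W F E PH M)"
proof -
  have "\<And>M'. matching E M' \<Longrightarrow> phi W F PH M M' \<ge> min (phi W F PA M M') (phi W F PB M M')"
    using phi_hybrid_ge_min[OF assms(1-4,6-8)] .
  then show ?thesis using popular_if_phi_ge_min dominant_if_phi_ge_min by blast
qed

end
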